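(* Let $G$ be a finite simple undirected bipartite graph and let $m$ be a nonnegative integer. Then $G$ does not contain more than $m$ pairwise vertex-disjoint $4k$-cycles if and only if, for every even $i\in\{0,2,4,\dots\}$ and every induced subgraph $G_i$ of $G$ on $i$ vertices, \[ \operatorname{per}(G_i)=(-1)^{i/2}\sum_{z=0}^{m}\frac{4^z}{z!}\sum_{T_z}\det(G_i\setminus T_z), \] where, for each $z$, the inner sum runs over all ordered tuples $T_z=(R_1,\dots,R_z)$ of $z$ mutually vertex-disjoint $4k$-cycles of $G_i$.
   Context: For a graph $H$ with vertex set $\{v_1,\dots,v_n\}$, the adjacency matrix $A(H)=(a_{ij})$ is the $n\times n$ matrix with $a_{ij}=1$ if $v_i$ and $v_j$ are adjacent and $0$ otherwise; $\det(H)$ and $\operatorname{per}(H)$ denote the determinant and the permanent $\operatorname{per}(M)=\sum_{\sigma\in S_n}\prod_i a_{i,\sigma(i)}$ of $A(H)$ (for the empty graph both equal $1$). A cycle of length $l$ is a sequence of distinct vertices $u_1,\dots,u_l$ with $u_j\sim u_{j+1}$ for $j<l$ and $u_l\sim u_1$ (considered as a subgraph); a $4k$-cycle is a cycle whose length is a positive multiple of $4$. For a tuple $T_z$ of vertex-disjoint cycles in $H$, $\det(H\setminus T_z)$ is the determinant of the principal submatrix of $A(H)$ obtained by deleting the rows and columns of all vertices lying on the cycles of $T_z$ (empty determinant $=1$). For $z=0$ the only tuple is the empty tuple, so the $z=0$ term is $\det(H)$. *)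

theory Defs
  imports Complex_Main "HOL-Combinatorics.Permutations"
begin

definition simple_graph :: "'a set \<Rightarrow> ('a \<Rightarrow> 'a \<Rightarrow> bool) \<Rightarrow> bool" where
  "simple_graph V E \<longleftrightarrow> finite V \<and> (\<forall>u v. E u v \<longrightarrow> E v u) \<and> (\<forall>u. \<not> E u u)
     \<and> (\<forall>u v. E u v \<longrightarrow> u \<in> V \<and> v \<in> V)"

definition bipartite :: "'a set \<Rightarrow> ('a \<Rightarrow> 'a \<Rightarrow> bool) \<Rightarrow> bool" where
  "bipartite V E \<longleftrightarrow> (\<exists>X. X \<subseteq> V \<and> (\<forall>u v. E u v \<longrightarrow> (u \<in> X \<longleftrightarrow> v \<notin> X)))"

definition adj :: "('a \<Rightarrow> 'a \<Rightarrow> bool) \<Rightarrow> 'a \<Rightarrow> 'a \<Rightarrow> real" where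
  "adj E u v = (if E u v then 1 else 0)"

text \<open>Determinant / permanent of the principal submatrix of A(G) indexed by the vertex set S
(Leibniz formula; rows/columns indexed by the elements of S). Empty S gives 1.\<close>
definition det_on :: "('a \<Rightarrow> 'a \<Rightarrow> bool) \<Rightarrow> 'a set \<Rightarrow> real" where
  "det_on E S = (\<Sum>p\<in>{p. p permutes S}. of_int (sign p) * (\<Prod>v\<in>S. adj E v (p v)))"

definition per_on :: "('a \<Rightarrow> 'a \<Rightarrow> bool) \<Rightarrow> 'a set \<Rightarrow> real" where
  "per_on E S = (\<Sum>p\<in>{p. p permutes S}. (\<Prod>v\<in>S. adj E v (p v)))"

text \<open>A cycle of length l in the graph (S, E restricted to S), considered as a subgraph:
represented by its edge set (each edge an unordered pair). Its vertex set is the union of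
its edges.\<close>
definition cycle_in :: "'a set \<Rightarrow> ('a \<Rightarrow> 'a \<Rightarrow> bool) \<Rightarrow> nat \<Rightarrow> 'a set set \<Rightarrow> bool" where
  "cycle_in S E l C \<longleftrightarrow> (\<exists>us. length us = l \<and> l \<ge> 3 \<and> distinct us \<and> set us \<subseteq> S
      \<and> (\<forall>j<l. E (us ! j) (us ! ((j + 1) mod l)))
      \<and> C = {{us ! j, us ! ((j + 1) mod l)} | j. j < l})"

definition cycle_vertices :: "'a set set \<Rightarrow> 'a set" where
  "cycle_vertices C = \<Union>C"

definition cycle4k_in :: "'a set \<Rightarrow> ('a \<Rightarrow> 'a \<Rightarrow> bool) \<Rightarrow> 'a set set \<Rightarrow> bool" where
  "cycle4k_in S E C \<longleftrightarrow> (\<exists>k>0. cycle_in S E (4 * k) C)"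

definition disjoint_4k_tuples :: "'a set \<Rightarrow> ('a \<Rightarrow> 'a \<Rightarrow> bool) \<Rightarrow> nat \<Rightarrow> 'a set set list set" where
  "disjoint_4k_tuples S E z = {Ts. length Ts = z \<and> (\<forall>C\<in>set Ts. cycle4k_in S E C)
      \<and> (\<forall>a b. a < z \<and> b < z \<and> a \<noteq> b \<longrightarrow>
              cycle_vertices (Ts ! a) \<inter> cycle_vertices (Ts ! b) = {})}"

definition tuple_vertices :: "'a set set list \<Rightarrow> 'a set" where
  "tuple_vertices Ts = (\<Union>C\<in>set Ts. cycle_vertices C)"

end

theory Submission
  imports Defs "HOL-Combinatorics.Cycles" "HOL-Combinatorics.Orbits"
begin

text \<open>Both sides are sums over the cycle covers of \<open>S\<close>, the permutations \<open>p\<close> of \<open>S\<close> moving every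
  vertex to a neighbour: \<open>per S\<close> counts them and \<open>det S\<close> sums their signs. In a bipartite graph
  every cycle of a cover is even, so \<open>sign p = (-1) ^ (card S div 2) * (-1) ^ c p\<close>, where \<open>c p\<close> is the
  number of cycles of \<open>p\<close> of length divisible by 4. Writing the contribution \<open>1\<close> of \<open>p\<close> to the
  permanent as \<open>(-1) ^ c p * (1 - 2) ^ c p\<close> and expanding binomially turns \<open>per S\<close> into a sum over
  ordered \<open>z\<close>-tuples \<open>T\<close> of disjoint \<open>4k\<close>-cycles, weighted by \<open>(-2) ^ z / z!\<close> times the signed
  number of covers containing \<open>T\<close>. A cycle of the graph is traced by exactly two cyclic permutations,
  so this signed number is \<open>(-2) ^ z * (-1) ^ (card S div 2) * det (S - T)\<close>, and altogether
  \<open>per S = (-1) ^ (card S div 2) * (\<Sum>z. 4 ^ z / z! * \<Sum>T. det (S - T))\<close> with \<open>z\<close> unbounded.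

  If there are no \<open>m + 1\<close> disjoint \<open>4k\<close>-cycles, the terms with \<open>z > m\<close> vanish. Conversely, on the
  vertex set \<open>S\<close> of an \<open>(m + 1)\<close>-tuple of disjoint \<open>4k\<close>-cycles with the fewest vertices, the only
  further terms come from \<open>(m + 1)\<close>-tuples covering \<open>S\<close>; each contributes \<open>det {} = 1\<close>, so the
  truncated identity fails for \<open>S\<close>.\<close>

section \<open>Cycle covers\<close>

definition cycle_covers :: "('a \<Rightarrow> 'a \<Rightarrow> bool) \<Rightarrow> 'a set \<Rightarrow> ('a \<Rightarrow> 'a) set" where
  "cycle_covers E S = {p. p permutes S \<and> (\<forall>v\<in>S. E v (p v))}"

lemma cycle_covers_permutes: "p \<in> cycle_covers E S \<Longrightarrow> p permutes S"
  unfolding cycle_covers_def by simp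

lemma cycle_covers_edge: "p \<in> cycle_covers E S \<Longrightarrow> v \<in> S \<Longrightarrow> E v (p v)"
  unfolding cycle_covers_def by simp

lemma finite_cycle_covers: "finite S \<Longrightarrow> finite (cycle_covers E S)"
  unfolding cycle_covers_def by (rule finite_subset[OF _ finite_permutations[of S]]) auto

lemma prod_adj_eq: "finite S \<Longrightarrow> (\<Prod>v\<in>S. adj E v (p v)) = (if \<forall>v\<in>S. E v (p v) then 1 else 0)"
  by (auto simp: adj_def intro!: prod.neutral)

lemma per_on_eq_card_cycle_covers:
  assumes "finite S" shows "per_on E S = real (card (cycle_covers E S))"
proof -
  have "per_on E S = (\<Sum>p\<in>{p. p permutes S}. (if \<forall>v\<in>S. E v (p v) then 1 else 0))"
    unfolding per_on_def using prod_adj_eq[OF assms] by simp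
  also have "\<dots> = (\<Sum>p\<in>cycle_covers E S. 1)"
    unfolding cycle_covers_def
    by (subst sum.inter_filter[symmetric]) (auto simp: finite_permutations assms)
  finally show ?thesis by simp
qed

lemma det_on_eq_sum_sign_cycle_covers:
  assumes "finite S" shows "det_on E S = (\<Sum>p\<in>cycle_covers E S. of_int (sign p))"
proof -
  have "det_on E S = (\<Sum>p\<in>{p. p permutes S}. (if \<forall>v\<in>S. E v (p v) then of_int (sign p) else 0))"
    unfolding det_on_def using prod_adj_eq[OF assms] by (intro sum.cong) auto
  also have "\<dots> = (\<Sum>p\<in>cycle_covers E S. of_int (sign p))"
    unfolding cycle_covers_def
    by (subst sum.inter_filter[symmetric]) (auto simp: finite_permutations assms)
  finally show ?thesis .
qed

section \<open>Orbits of a permutation and the cycles they trace\<close>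

definition perm_edges :: "('a \<Rightarrow> 'a) \<Rightarrow> 'a set \<Rightarrow> 'a set set" where
  "perm_edges p B = {{x, p x} | x. x \<in> B}"

lemma Union_perm_edges: "p ` B \<subseteq> B \<Longrightarrow> \<Union>(perm_edges p B) = B"
  unfolding perm_edges_def by blast

lemma perm_edges_cong: "(\<And>x. x \<in> B \<Longrightarrow> p x = q x) \<Longrightarrow> perm_edges p B = perm_edges q B"
  unfolding perm_edges_def by (intro Collect_cong iffI; elim exE conjE; metis)

lemma perm_edges_inv:
  assumes "g permutes W" shows "perm_edges (inv g) W = perm_edges g W"
proof -
  have a: "inv g x \<in> W" "g (inv g x) = x" if "x \<in> W" for x
    using that permutes_in_image[OF permutes_inv[OF assms]] permutes_inverses(1)[OF assms] by auto
  have b: "g y \<in> W" "inv g (g y) = y" if "y \<in> W" for y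
    using that permutes_in_image[OF assms] permutes_inverses(2)[OF assms] by auto
  show ?thesis unfolding perm_edges_def
  proof (intro Collect_cong iffI; elim exE conjE)
    fix e x assume "e = {x, inv g x}" "x \<in> W"
    then show "\<exists>y. e = {y, g y} \<and> y \<in> W" using a[of x] by (intro exI[of _ "inv g x"]) auto
  next
    fix e y assume "e = {y, g y}" "y \<in> W"
    then show "\<exists>x. e = {x, inv g x} \<and> x \<in> W" using b[of y] by (intro exI[of _ "g y"]) auto
  qed
qed

text \<open>Represented by their edge sets, the \<open>4k\<close>-cycles of \<open>p\<close> are directly comparable with the
  cycles of the graph in the sense of \<^const>\<open>cycle_in\<close>.\<close>
definition cycles4k_of :: "('a \<Rightarrow> 'a) \<Rightarrow> 'a set \<Rightarrow> 'a set set set" where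
  "cycles4k_of p S = perm_edges p ` {B \<in> (\<lambda>s. orbit p s) ` S. 4 dvd card B}"

lemma finite_cycles4k_of: "finite S \<Longrightarrow> finite (cycles4k_of p S)"
  unfolding cycles4k_of_def by simp

lemma card_cycles4k_of_le: "finite S \<Longrightarrow> card (cycles4k_of p S) \<le> card S"
proof -
  assume fin: "finite S"
  have "card (cycles4k_of p S) \<le> card {B \<in> (\<lambda>s. orbit p s) ` S. 4 dvd card B}"
    unfolding cycles4k_of_def using fin by (intro card_image_le) simp
  also have "\<dots> \<le> card ((\<lambda>s. orbit p s) ` S)" using fin by (intro card_mono) auto
  also have "\<dots> \<le> card S" using fin by (rule card_image_le)
  finally show ?thesis .
qed

lemma image_orbit_subset: "p ` orbit p s \<subseteq> orbit p s"
  by (auto intro: orbit.step)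

lemma Union_perm_edges_orbit: "\<Union>(perm_edges p (orbit p s)) = orbit p s"
  by (rule Union_perm_edges[OF image_orbit_subset])

lemma orbit_eq_if_in_orbit:
  assumes "p permutes S" "finite S" "x \<in> orbit p s"
  shows "orbit p x = orbit p s"
  using orbit_cyclic_eq3[OF cyclic_on_orbit[OF assms(1,2), of s] assms(3)] by simp

lemma set_support_eq_orbit:
  assumes "p permutes S" "finite S" shows "set (support p s) = orbit p s"
proof -
  have perm: "permutation p" using permutes_imp_permutation[OF assms(2,1)] .
  show ?thesis
    unfolding support_set[OF perm] orbit_altdef_permutation[OF perm] by auto
qed

lemma length_support_eq_card_orbit:
  assumes "p permutes S" "finite S" shows "length (support p s) = card (orbit p s)"
  using distinct_card[OF cycle_of_permutation[OF permutes_imp_permutation[OF assms(2,1)]]]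
    set_support_eq_orbit[OF assms] by metis

lemma card_orbit_pos:
  assumes "p permutes S" "finite S" shows "card (orbit p s) > 0"
  using length_support_eq_card_orbit[OF assms, of s]
    least_power_of_permutation(2)[OF permutes_imp_permutation[OF assms(2,1)], of s] by simp

lemma orbit_perm_restrict_diff_orbit:
  assumes p: "p permutes S" and fin: "finite S" and x: "x \<in> S - orbit p s"
  shows "orbit (perm_restrict p (S - orbit p s)) x = orbit p x"
proof (rule orbit_cong0[symmetric, OF x])
  have "p y \<in> S - orbit p s" if "y \<in> S - orbit p s" for y
    using that cyclic_on_f_in[OF p cyclic_on_orbit[OF p fin], of y s] permutes_in_image[OF p]
    by blast
  then show "p \<in> S - orbit p s \<rightarrow> S - orbit p s" by blast
qed (simp add: perm_restrict_def)

lemma orbits_remove_orbit: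
  assumes p: "p permutes S" and fin: "finite S" and s: "s \<in> S"
  defines "B \<equiv> orbit p s" and "q \<equiv> perm_restrict p (S - orbit p s)"
  shows "(\<lambda>x. orbit p x) ` S = insert B ((\<lambda>x. orbit q x) ` (S - B))"
proof -
  have "B \<subseteq> S" unfolding B_def by (rule permutes_orbit_subset[OF p s])
  then have "(\<lambda>x. orbit p x) ` S = (\<lambda>x. orbit p x) ` B \<union> (\<lambda>x. orbit p x) ` (S - B)"
    by (metis Diff_partition image_Un)
  also have "(\<lambda>x. orbit p x) ` B = {B}"
    using orbit_eq_if_in_orbit[OF p fin] permutation_self_in_orbit[OF permutes_imp_permutation[OF fin p]]
    unfolding B_def by blast
  also have "(\<lambda>x. orbit p x) ` (S - B) = (\<lambda>x. orbit q x) ` (S - B)"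
    using orbit_perm_restrict_diff_orbit[OF p fin] unfolding B_def q_def by simp
  finally show ?thesis by simp
qed

lemma cycles4k_of_remove_orbit:
  assumes p: "p permutes S" and fin: "finite S" and s: "s \<in> S"
  defines "B \<equiv> orbit p s" and "q \<equiv> perm_restrict p (S - orbit p s)"
  shows "cycles4k_of p S = (if 4 dvd card B then insert (perm_edges p B) (cycles4k_of q (S - B))
                            else cycles4k_of q (S - B))"
proof -
  have q: "q permutes S - B"
    unfolding q_def B_def by (rule perm_restrict_diff_cyclic[OF p cyclic_on_orbit[OF p fin]])
  have "perm_edges p (orbit q x) = perm_edges q (orbit q x)" if "x \<in> S - B" for x
    using permutes_orbit_subset[OF q that] by (intro perm_edges_cong) (auto simp: q_def B_def perm_restrict_def)
  then have "perm_edges p ` {B' \<in> (\<lambda>x. orbit q x) ` (S - B). 4 dvd card B'} = cycles4k_of q (S - B)"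
    unfolding cycles4k_of_def by (intro image_cong) auto
  moreover have "{B' \<in> (\<lambda>x. orbit p x) ` S. 4 dvd card B'} =
      (if 4 dvd card B then insert B else id) {B' \<in> (\<lambda>x. orbit q x) ` (S - B). 4 dvd card B'}"
    unfolding orbits_remove_orbit[OF p fin s, folded B_def q_def] by auto
  ultimately show ?thesis unfolding cycles4k_of_def[of p] by auto
qed

lemma perm_edges_orbit_notin_cycles4k_of_remove:
  assumes p: "p permutes S" and fin: "finite S" and s: "s \<in> S"
  defines "B \<equiv> orbit p s" and "q \<equiv> perm_restrict p (S - orbit p s)"
  shows "perm_edges p B \<notin> cycles4k_of q (S - B)"
proof
  have q: "q permutes S - B"
    unfolding q_def B_def by (rule perm_restrict_diff_cyclic[OF p cyclic_on_orbit[OF p fin]])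
  assume "perm_edges p B \<in> cycles4k_of q (S - B)"
  then obtain x where x: "x \<in> S - B" and "perm_edges p B = perm_edges q (orbit q x)"
    unfolding cycles4k_of_def by auto
  then have "B = orbit q x" unfolding B_def by (metis Union_perm_edges_orbit)
  then have "B \<subseteq> S - B" using permutes_orbit_subset[OF q x] by simp
  moreover have "s \<in> B"
    unfolding B_def by (rule permutation_self_in_orbit[OF permutes_imp_permutation[OF fin p]])
  ultimately show False by blast
qed

lemma card_cycles4k_of_remove_orbit:
  assumes p: "p permutes S" and fin: "finite S" and s: "s \<in> S"
  defines "B \<equiv> orbit p s" and "q \<equiv> perm_restrict p (S - orbit p s)"
  shows "card (cycles4k_of p S) = (if 4 dvd card B then Suc (card (cycles4k_of q (S - B)))
                                   else card (cycles4k_of q (S - B)))"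
  using cycles4k_of_remove_orbit[OF p fin s] perm_edges_orbit_notin_cycles4k_of_remove[OF p fin s]
    finite_cycles4k_of[of "S - B" q] fin
  unfolding B_def q_def by simp

section \<open>The sign of a cycle cover of a bipartite graph\<close>

lemma sign_cycle_of_list:
  "distinct cs \<Longrightarrow> cs \<noteq> [] \<Longrightarrow> sign (cycle_of_list cs) = (-1) ^ (length cs - 1)"
proof (induction cs rule: cycle_of_list.induct)
  case (1 i j cs)
  have "sign (cycle_of_list (i # j # cs)) = sign (transpose i j) * sign (cycle_of_list (j # cs))"
    by (simp add: sign_compose permutation_swap_id permutation_of_cycle)
  also have "\<dots> = - ((-1) ^ (length (j # cs) - 1))" using 1 by (simp add: sign_swap_id)
  finally show ?case by (simp del: cycle_of_list.simps)
qed auto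

lemma permutes_eq_cycle_comp_perm_restrict:
  assumes p: "p permutes S" and fin: "finite S"
  shows "p = cycle_of_list (support p s) \<circ> perm_restrict p (S - orbit p s)"
proof
  fix a
  have perm: "permutation p" by (rule permutes_imp_permutation[OF fin p])
  note st = set_support_eq_orbit[OF p fin, of s]
  consider "a \<in> S - orbit p s" | "a \<in> orbit p s" | "a \<notin> S" "a \<notin> orbit p s" by blast
  then show "p a = (cycle_of_list (support p s) \<circ> perm_restrict p (S - orbit p s)) a"
  proof cases
    case 1
    have "p a \<notin> orbit p s" using 1 cyclic_on_f_in[OF p cyclic_on_orbit[OF p fin, of s], of a] by blast
    then show ?thesis using 1 id_outside_supp[of "p a" "support p s"] st by (simp add: perm_restrict_def)
  next
    case 2
    then show ?thesis using cycle_restrict[OF perm, of a s] st by (simp add: perm_restrict_def)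
  next
    case 3
    then show ?thesis using id_outside_supp[of a "support p s"] st permutes_not_in[OF p 3(1)]
      by (simp add: perm_restrict_def)
  qed
qed

lemma sign_remove_orbit:
  assumes p: "p permutes S" and fin: "finite S"
  shows "sign p = (-1) ^ (card (orbit p s) - 1) * sign (perm_restrict p (S - orbit p s))"
proof -
  let ?q = "perm_restrict p (S - orbit p s)"
  have "permutation ?q"
    using perm_restrict_diff_cyclic[OF p cyclic_on_orbit[OF p fin]] fin
    by (metis finite_Diff permutes_imp_permutation)
  moreover have "support p s \<noteq> []"
    using length_support_eq_card_orbit[OF p fin] card_orbit_pos[OF p fin] by (metis less_numeral_extra(3) list.size(3))
  ultimately show ?thesis
    using permutes_eq_cycle_comp_perm_restrict[OF p fin, of s] permutation_of_cycle
      sign_cycle_of_list[OF cycle_of_permutation[OF permutes_imp_permutation[OF fin p]]]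
      length_support_eq_card_orbit[OF p fin] sign_compose
    by metis
qed

lemma cycle_cover_funpow_side:
  assumes p: "p \<in> cycle_covers E S" and bip: "\<forall>u v. E u v \<longrightarrow> (u \<in> X \<longleftrightarrow> v \<notin> X)"
    and s: "s \<in> S"
  shows "(p ^^ n) s \<in> S \<and> ((p ^^ n) s \<in> X \<longleftrightarrow> (s \<in> X \<longleftrightarrow> even n))"
proof (induction n)
  case 0 then show ?case using s by simp
next
  case (Suc n)
  let ?y = "(p ^^ n) s"
  have "E ?y (p ?y)" using cycle_covers_edge[OF p] Suc by blast
  then have "?y \<in> X \<longleftrightarrow> p ?y \<notin> X" using bip by blast
  moreover have "p ?y \<in> S" using Suc permutes_in_image[OF cycle_covers_permutes[OF p]] by simp
  ultimately show ?case using Suc by auto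
qed

lemma even_card_orbit_cycle_cover:
  assumes p: "p \<in> cycle_covers E S" and bip: "\<forall>u v. E u v \<longrightarrow> (u \<in> X \<longleftrightarrow> v \<notin> X)"
    and fin: "finite S" and s: "s \<in> S"
  shows "even (card (orbit p s))"
proof -
  have "least_power p s = card (orbit p s)"
    using length_support_eq_card_orbit[OF cycle_covers_permutes[OF p] fin] by simp
  then have "(p ^^ card (orbit p s)) s = s"
    by (metis least_power_of_permutation(1) permutes_imp_permutation[OF fin cycle_covers_permutes[OF p]])
  then show ?thesis using cycle_cover_funpow_side[OF p bip s, of "card (orbit p s)"] by auto
qed

lemma cycle_cover_perm_restrict:
  assumes p: "p \<in> cycle_covers E S" and fin: "finite S"
  shows "perm_restrict p (S - orbit p s) \<in> cycle_covers E (S - orbit p s)"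
proof -
  have pS: "p permutes S" by (rule cycle_covers_permutes[OF p])
  show ?thesis
    using perm_restrict_diff_cyclic[OF pS cyclic_on_orbit[OF pS fin]] cycle_covers_edge[OF p]
    unfolding cycle_covers_def by (auto simp: perm_restrict_def)
qed

lemma minus_one_power_orbit_step:
  assumes "even L" "L > 0" "even M"
  shows "(-1::real) ^ (L - 1) * (-1) ^ (M div 2 + c) =
         (-1) ^ ((L + M) div 2 + (if 4 dvd L then Suc c else c))"
proof -
  obtain t u where t: "L = 2 * t" and u: "M = 2 * u" using assms by (auto elim!: evenE)
  have "L - 1 = Suc (2 * (t - 1))" using t assms(2) by simp
  moreover have "4 dvd L \<longleftrightarrow> even t" using t by auto
  moreover have "(L + M) div 2 = t + u" using t u by simp
  ultimately show ?thesis using u by (auto simp: power_add)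
qed

text \<open>A cycle of even length \<open>L\<close> has sign \<open>-1\<close>, and \<open>(-1) ^ (L div 2) = -1\<close> unless \<open>4 dvd L\<close>;
  so the sign of a cycle cover is \<open>(-1) ^ (card S div 2)\<close> corrected by its \<open>4k\<close>-cycles.\<close>
lemma sign_cycle_cover_bipartite:
  assumes bip: "\<forall>u v. E u v \<longrightarrow> (u \<in> X \<longleftrightarrow> v \<notin> X)"
  shows "finite S \<Longrightarrow> p \<in> cycle_covers E S \<Longrightarrow>
    even (card S) \<and> real_of_int (sign p) = (-1) ^ (card S div 2 + card (cycles4k_of p S))"
proof (induction "card S" arbitrary: S p rule: less_induct)
  case less
  have pS: "p permutes S" by (rule cycle_covers_permutes[OF less.prems(2)])
  show ?case
  proof (cases "S = {}")
    case True
    then show ?thesis using pS by (simp add: cycles4k_of_def)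
  next
    case False
    then obtain s where s: "s \<in> S" by blast
    define B where "B = orbit p s"
    define q where "q = perm_restrict p (S - B)"
    have fin: "finite S" by (rule less.prems(1))
    have BS: "B \<subseteq> S" unfolding B_def by (rule permutes_orbit_subset[OF pS s])
    have L: "even (card B)" "card B > 0"
      unfolding B_def using even_card_orbit_cycle_cover[OF less.prems(2) bip fin s] card_orbit_pos[OF pS fin]
      by auto
    have cS: "card S = card B + card (S - B)"
      using BS fin by (metis card_Diff_subset card_mono finite_subset le_add_diff_inverse)
    then have "card (S - B) < card S" using L(2) by simp
    then have IH: "even (card (S - B))"
      "real_of_int (sign q) = (-1) ^ (card (S - B) div 2 + card (cycles4k_of q (S - B)))"
      using less.hyps[of "S - B" q] cycle_cover_perm_restrict[OF less.prems(2) fin, of s] fin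
      unfolding q_def B_def by auto
    have "real_of_int (sign p) = (-1) ^ (card B - 1) * real_of_int (sign q)"
      using sign_remove_orbit[OF pS fin, of s] unfolding q_def B_def by simp
    also have "\<dots> = (-1) ^ (card S div 2 +
        (if 4 dvd card B then Suc (card (cycles4k_of q (S - B))) else card (cycles4k_of q (S - B))))"
      unfolding IH(2) cS by (rule minus_one_power_orbit_step[OF L IH(1)])
    finally show ?thesis
      using card_cycles4k_of_remove_orbit[OF pS fin s] L(1) IH(1) cS unfolding q_def B_def by simp
  qed
qed

lemma sum_cycle_covers_minus_one_power_eq_det_on:
  assumes bip: "\<forall>u v. E u v \<longrightarrow> (u \<in> X \<longleftrightarrow> v \<notin> X)" and fin: "finite S"
  shows "(\<Sum>q\<in>cycle_covers E S. (-1::real) ^ card (cycles4k_of q S)) = (-1) ^ (card S div 2) * det_on E S"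
proof -
  have "(-1::real) ^ card (cycles4k_of q S) = (-1) ^ (card S div 2) * real_of_int (sign q)"
    if "q \<in> cycle_covers E S" for q
    using sign_cycle_cover_bipartite[OF bip fin that] by (simp add: power_add flip: mult.assoc power_mult_distrib)
  then show ?thesis
    by (simp add: det_on_eq_sum_sign_cycle_covers[OF fin] sum_distrib_left)
qed

section \<open>Cycles of the graph and of cycle covers\<close>

lemma cycle_inE:
  assumes "cycle_in S E l c"
  obtains us where "length us = l" "l \<ge> 3" "distinct us" "set us \<subseteq> S"
    "\<forall>j<l. E (us ! j) (us ! ((j + 1) mod l))" "c = {{us ! j, us ! ((j + 1) mod l)} | j. j < l}"
    "\<Union>c = set us"
proof -
  obtain us where us: "length us = l" "l \<ge> 3" "distinct us" "set us \<subseteq> S"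
      "\<forall>j<l. E (us ! j) (us ! ((j + 1) mod l))" "c = {{us ! j, us ! ((j + 1) mod l)} | j. j < l}"
    using assms unfolding cycle_in_def by blast
  have "us ! j \<in> set us" "us ! ((j + 1) mod l) \<in> set us" if "j < l" for j
    using that us(1,2) by simp_all
  then have "\<Union>c \<subseteq> set us" using us(6) by blast
  moreover have "set us \<subseteq> \<Union>c" using us(1,6) by (auto simp: set_conv_nth)
  ultimately show thesis using that us by blast
qed

lemma cycle_in_mono: "cycle_in S E l c \<Longrightarrow> \<Union>c \<subseteq> T \<Longrightarrow> cycle_in T E l c"
  by (erule cycle_inE) (auto simp: cycle_in_def)

lemma cycle4k_in_mono: "cycle4k_in S E c \<Longrightarrow> \<Union>c \<subseteq> T \<Longrightarrow> cycle4k_in T E c"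
  unfolding cycle4k_in_def using cycle_in_mono by blast

lemma cycle4k_inD:
  assumes "cycle4k_in S E c"
  shows "\<Union>c \<subseteq> S" "finite (\<Union>c)" "4 dvd card (\<Union>c)" "\<Union>c \<noteq> {}"
proof -
  obtain k where k: "k > 0" "cycle_in S E (4 * k) c" using assms unfolding cycle4k_in_def by blast
  obtain us where us: "length us = 4 * k" "distinct us" "set us \<subseteq> S" "\<Union>c = set us"
    by (rule cycle_inE[OF k(2)]) blast
  show "\<Union>c \<subseteq> S" "finite (\<Union>c)" using us by auto
  show "4 dvd card (\<Union>c)" using us distinct_card by (metis dvd_triv_left)
  show "\<Union>c \<noteq> {}" using us k by auto
qed

lemma cycle_of_list_nth:
  assumes "distinct us" "j < length us"
  shows "cycle_of_list us (us ! j) = us ! ((j + 1) mod length us)"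
proof -
  have "cycle_of_list us (us ! j) = map (cycle_of_list us) us ! j" using assms(2) by simp
  also have "\<dots> = rotate 1 us ! j" using cyclic_rotation[OF assms(1), of 1] by simp
  also have "\<dots> = us ! ((1 + j) mod length us)" by (rule nth_rotate) (use assms(2) in simp)
  finally show ?thesis by simp
qed

lemma cyclic_on_cycle_of_list:
  assumes d: "distinct us" and ne: "us \<noteq> []"
  shows "cyclic_on (cycle_of_list us) (set us)"
proof -
  let ?r = "cycle_of_list us"
  have l0: "0 < length us" using ne by simp
  have "(?r ^^ n) (us ! 0) = us ! (n mod length us)" for n
  proof -
    have "(?r ^^ n) (us ! 0) = map (?r ^^ n) us ! 0" using l0 by simp
    also have "\<dots> = us ! (n mod length us)"
      unfolding cyclic_rotation[OF d, of n] using l0 by (simp add: nth_rotate)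
    finally show ?thesis .
  qed
  then have "orbit ?r (us ! 0) = {us ! (n mod length us) | n. True}"
    by (simp add: orbit_altdef_permutation[OF permutation_of_cycle])
  also have "\<dots> = set us"
    using l0 by (auto simp: set_conv_nth) (metis mod_less)
  finally show ?thesis unfolding cyclic_on_def using l0 by (intro bexI[of _ "us ! 0"]) auto
qed

lemma perm_edges_cycle_of_list:
  assumes "distinct us"
  shows "perm_edges (cycle_of_list us) (set us) =
    {{us ! j, us ! ((j + 1) mod length us)} | j. j < length us}"
  unfolding perm_edges_def using cycle_of_list_nth[OF assms] by (auto simp: set_conv_nth)

lemma cycle_of_list_neq_inv:
  assumes d: "distinct us" and l3: "length us \<ge> 3"
  shows "cycle_of_list us \<noteq> inv (cycle_of_list us)"
proof
  let ?r = "cycle_of_list us"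
  assume "?r = inv ?r"
  then have "?r (?r (us ! 0)) = us ! 0"
    by (metis permutes_inverses(1)[OF cycle_permutes])
  moreover have "length us > 2" "us \<noteq> []" using l3 by auto
  then have "?r (?r (us ! 0)) = us ! 2"
    using cycle_of_list_nth[OF d, of 0] cycle_of_list_nth[OF d, of 1] by (simp add: numeral_2_eq_2)
  ultimately have "us ! 2 = us ! 0" by simp
  then show False using nth_eq_iff_index_eq[OF d, of 2 0] l3 by (cases us) auto
qed

lemma perm_edges_eq_imp_neighbour:
  assumes r: "r permutes W" and eq: "perm_edges h W = perm_edges r W" and x: "x \<in> W"
  shows "h x = r x \<or> h x = inv r x"
proof -
  have "{x, h x} \<in> perm_edges r W" using eq x unfolding perm_edges_def by blast
  then obtain y where "{x, h x} = {y, r y}" unfolding perm_edges_def by blast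
  then show ?thesis using permutes_inverses(2)[OF r, of y] by (auto simp: doubleton_eq_iff)
qed

definition orientations :: "'a set \<Rightarrow> 'a set set \<Rightarrow> ('a \<Rightarrow> 'a) set" where
  "orientations W c = {r. r permutes W \<and> cyclic_on r W \<and> perm_edges r W = c}"

lemma card_le_two_if_cyclic_on_swap:
  assumes hc: "cyclic_on h W" and a: "a \<in> W" and ha: "h a = b" and hb: "h b = a"
  shows "card W \<le> 2"
proof -
  have "orbit h a \<subseteq> {a, b}"
  proof
    fix y assume "y \<in> orbit h a"
    then show "y \<in> {a, b}" by induction (auto simp: ha hb)
  qed
  then have "card W \<le> card {a, b}" using orbit_cyclic_eq3[OF hc a] by (simp add: card_mono)
  also have "\<dots> \<le> 2" by (simp add: card_insert_le_m1)
  finally show ?thesis .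
qed

text \<open>A cyclic permutation \<open>h\<close> of at least three points that moves every point to one of its
  two neighbours along \<open>g\<close> follows \<open>g\<close> everywhere once it does at one point: otherwise it would
  bounce back and close an orbit of length two.\<close>
lemma cyclic_perm_eq_if_neighbours:
  assumes g: "g permutes W" and fin: "finite W" and gc: "cyclic_on g W"
    and h: "h permutes W" and hc: "cyclic_on h W" and W3: "card W \<ge> 3"
    and nb: "\<forall>x\<in>W. h x = g x \<or> h x = inv g x" and u: "u \<in> W" and hu: "h u = g u"
  shows "h = g"
proof -
  have gin: "(g ^^ n) u \<in> W" for n using u permutes_in_image[OF permutes_funpow[OF g]] by blast
  have step: "h ((g ^^ n) u) = g ((g ^^ n) u)" for n
  proof (induction n)
    case 0 then show ?case using hu by simp
  next
    case (Suc n)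
    define a where "a = (g ^^ n) u"
    define b where "b = g a"
    have aW: "a \<in> W" unfolding a_def by (rule gin)
    have bW: "b \<in> W" unfolding b_def using aW by (simp add: permutes_in_image[OF g])
    have ha: "h a = b" using Suc unfolding a_def b_def by simp
    have "h b = g b"
    proof (rule ccontr)
      assume "h b \<noteq> g b"
      then have "h b = a" using nb bW permutes_inverses(2)[OF g] unfolding b_def by metis
      then show False using card_le_two_if_cyclic_on_swap[OF hc aW ha] W3 by simp
    qed
    then show ?case unfolding b_def a_def by simp
  qed
  have W: "W = {(g ^^ n) u | n. True}"
    using orbit_cyclic_eq3[OF gc u] orbit_altdef_permutation[OF permutes_imp_permutation[OF fin g]]
    by simp
  show ?thesis
  proof
    fix x show "h x = g x"
    proof (cases "x \<in> W")
      case True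
      then show ?thesis using W step by auto
    next
      case False
      then show ?thesis by (simp add: permutes_not_in[OF g] permutes_not_in[OF h])
    qed
  qed
qed

lemma orientations_cycle_of_list:
  assumes d: "distinct us" and l3: "length us \<ge> 3"
  defines "r \<equiv> cycle_of_list us"
  shows "orientations (set us) (perm_edges r (set us)) = {r, inv r}"
proof
  have rp: "r permutes set us" unfolding r_def by (rule cycle_permutes)
  have rc: "cyclic_on r (set us)" unfolding r_def using cyclic_on_cycle_of_list[OF d] l3 by (metis list.size(3) not_numeral_le_zero)
  have ic: "cyclic_on (inv r) (set us)"
    using rc orbit_inv_eq[OF permutation_of_cycle, of us] unfolding cyclic_on_def r_def by auto
  show "{r, inv r} \<subseteq> orientations (set us) (perm_edges r (set us))"
    unfolding orientations_def using rp rc ic permutes_inv[OF rp] perm_edges_inv[OF rp] by auto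
  show "orientations (set us) (perm_edges r (set us)) \<subseteq> {r, inv r}"
  proof
    fix h assume "h \<in> orientations (set us) (perm_edges r (set us))"
    then have hp: "h permutes set us" "cyclic_on h (set us)" "perm_edges h (set us) = perm_edges r (set us)"
      unfolding orientations_def by auto
    have nb: "\<forall>x\<in>set us. h x = r x \<or> h x = inv r x"
      using perm_edges_eq_imp_neighbour[OF rp hp(3)] by blast
    have u0: "us ! 0 \<in> set us" using l3 by (cases us) auto
    have c3: "card (set us) \<ge> 3" using l3 distinct_card[OF d] by simp
    show "h \<in> {r, inv r}"
    proof (cases "h (us ! 0) = r (us ! 0)")
      case True
      then show ?thesis using cyclic_perm_eq_if_neighbours[OF rp _ rc hp(1,2) c3 nb u0] by simp
    next
      case False
      then have "h (us ! 0) = inv r (us ! 0)" using nb u0 by blast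
      moreover have "\<forall>x\<in>set us. h x = inv r x \<or> h x = inv (inv r) x"
        using nb inv_inv_eq[OF permutes_bij[OF rp]] by auto
      ultimately show ?thesis
        using cyclic_perm_eq_if_neighbours[OF permutes_inv[OF rp] _ ic hp(1,2) c3 _ u0] by simp
    qed
  qed
qed

lemma card_orientations:
  assumes "cycle_in S E l c"
  shows "card (orientations (\<Union>c) c) = 2"
proof -
  obtain us where us: "length us = l" "l \<ge> 3" "distinct us"
      "c = {{us ! j, us ! ((j + 1) mod l)} | j. j < l}" "\<Union>c = set us"
    by (rule cycle_inE[OF assms]) blast
  then have "c = perm_edges (cycle_of_list us) (set us)"
    using perm_edges_cycle_of_list[OF us(3)] by simp
  then show ?thesis
    using orientations_cycle_of_list[OF us(3)] cycle_of_list_neq_inv[OF us(3)] us by simp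
qed

lemma orientations_edge:
  assumes sym: "\<forall>u v. E u v \<longrightarrow> E v u" and c: "cycle_in S E l c"
    and r: "r \<in> orientations (\<Union>c) c" and x: "x \<in> \<Union>c"
  shows "E x (r x)"
proof -
  obtain us where us: "\<forall>j<l. E (us ! j) (us ! ((j + 1) mod l))"
      "c = {{us ! j, us ! ((j + 1) mod l)} | j. j < l}"
    by (rule cycle_inE[OF c]) blast
  have "{x, r x} \<in> c" using r x unfolding orientations_def perm_edges_def by blast
  then obtain j where "j < l" "{x, r x} = {us ! j, us ! ((j + 1) mod l)}" using us(2) by blast
  then show ?thesis using us(1) sym by (auto simp: doubleton_eq_iff)
qed

lemma cycle_in_perm_edges_orbit:
  assumes p: "p \<in> cycle_covers E S" and fin: "finite S" and s: "s \<in> S"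
    and l3: "card (orbit p s) \<ge> 3"
  shows "cycle_in S E (card (orbit p s)) (perm_edges p (orbit p s))"
proof -
  have pS: "p permutes S" by (rule cycle_covers_permutes[OF p])
  define us where "us = support p s"
  have d: "distinct us"
    unfolding us_def by (rule cycle_of_permutation[OF permutes_imp_permutation[OF fin pS]])
  have set_us: "set us = orbit p s" unfolding us_def by (rule set_support_eq_orbit[OF pS fin])
  have len: "length us = card (orbit p s)"
    unfolding us_def by (rule length_support_eq_card_orbit[OF pS fin])
  have agree: "p x = cycle_of_list us x" if "x \<in> set us" for x
    using cycle_restrict[OF permutes_imp_permutation[OF fin pS]] that unfolding us_def by simp
  have "perm_edges p (orbit p s) = perm_edges (cycle_of_list us) (set us)"
    unfolding set_us[symmetric] using agree by (rule perm_edges_cong)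
  moreover have "E (us ! j) (us ! ((j + 1) mod length us))" if "j < length us" for j
    using cycle_covers_edge[OF p] agree nth_mem[OF that] cycle_of_list_nth[OF d that]
      permutes_orbit_subset[OF pS s] set_us by (metis subsetD)
  ultimately show ?thesis
    unfolding cycle_in_def using d set_us len l3 permutes_orbit_subset[OF pS s]
      perm_edges_cycle_of_list[OF d]
    by (intro exI[of _ us]) simp
qed

lemma cycle4k_in_cycles4k_of:
  assumes p: "p \<in> cycle_covers E S" and fin: "finite S" and a: "a \<in> cycles4k_of p S"
  shows "cycle4k_in S E a"
proof -
  obtain s where s: "s \<in> S" "4 dvd card (orbit p s)" and a_eq: "a = perm_edges p (orbit p s)"
    using a unfolding cycles4k_of_def by blast
  obtain k where k: "card (orbit p s) = 4 * k" using s(2) by blast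
  have "k > 0" using k card_orbit_pos[OF cycle_covers_permutes[OF p] fin, of s] by simp
  then show ?thesis
    unfolding cycle4k_in_def a_eq using k cycle_in_perm_edges_orbit[OF p fin s(1)] by auto
qed

lemma cycles4k_of_disjoint:
  assumes p: "p permutes S" and fin: "finite S"
    and a: "a \<in> cycles4k_of p S" and b: "b \<in> cycles4k_of p S" and ab: "a \<noteq> b"
  shows "\<Union>a \<inter> \<Union>b = {}"
proof -
  obtain s t where a_eq: "a = perm_edges p (orbit p s)" and b_eq: "b = perm_edges p (orbit p t)"
    using a b unfolding cycles4k_of_def by blast
  have "orbit p s \<noteq> orbit p t" using ab a_eq b_eq by auto
  then show ?thesis
    unfolding a_eq b_eq Union_perm_edges_orbit using orbit_eq_if_in_orbit[OF p fin] by blast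
qed

section \<open>Cycle covers through a given \<open>4k\<close>-cycle\<close>

definition join_perm :: "'a set \<Rightarrow> ('a \<Rightarrow> 'a) \<Rightarrow> ('a \<Rightarrow> 'a) \<Rightarrow> 'a \<Rightarrow> 'a" where
  "join_perm W r q = (\<lambda>x. if x \<in> W then r x else q x)"

lemma join_perm_inj:
  assumes "r permutes W" "r' permutes W" "q permutes (S - W)" "q' permutes (S - W)"
    and "join_perm W r q = join_perm W r' q'"
  shows "r = r'" and "q = q'"
proof -
  have "r x = r' x" "q x = q' x" for x
    using assms(5) permutes_not_in[OF assms(1), of x] permutes_not_in[OF assms(2), of x]
      permutes_not_in[OF assms(3), of x] permutes_not_in[OF assms(4), of x]
    by (cases "x \<in> W"; auto simp: join_perm_def fun_eq_iff dest: spec[of _ x])+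
  then show "r = r'" and "q = q'" by auto
qed

lemma join_perm_permutes:
  assumes r: "r permutes W" and q: "q permutes (S - W)" and WS: "W \<subseteq> S"
  shows "join_perm W r q permutes S"
proof -
  have "join_perm W r q x = (r \<circ> q) x" for x
    using permutes_not_in[OF q, of x] permutes_not_in[OF r, of "q x"] permutes_in_image[OF q, of x]
    by (cases "x \<in> W") (auto simp: join_perm_def)
  then have "join_perm W r q = r \<circ> q" ..
  then show ?thesis
    using permutes_compose[OF permutes_subset[OF q] permutes_subset[OF r WS]] by auto
qed

lemma join_perm_cycle_cover:
  assumes r: "r \<in> orientations W c" and q: "q \<in> cycle_covers E (S - W)" and WS: "W \<subseteq> S"
    and Er: "\<forall>x\<in>W. E x (r x)"
  shows "join_perm W r q \<in> cycle_covers E S"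
  using join_perm_permutes[OF _ cycle_covers_permutes[OF q] WS] r Er cycle_covers_edge[OF q]
  unfolding orientations_def cycle_covers_def by (auto simp: join_perm_def)

lemma cycles4k_of_join_perm:
  assumes r: "r \<in> orientations W c" and q: "q permutes (S - W)" and WS: "W \<subseteq> S"
    and fin: "finite S" and W4: "4 dvd card W" and Wne: "W \<noteq> {}"
  shows "cycles4k_of (join_perm W r q) S = insert c (cycles4k_of q (S - W))"
    and "c \<notin> cycles4k_of q (S - W)"
proof -
  let ?p = "join_perm W r q"
  have rp: "r permutes W" "cyclic_on r W" "perm_edges r W = c"
    using r unfolding orientations_def by auto
  have pS: "?p permutes S" by (rule join_perm_permutes[OF rp(1) q WS])
  obtain w where w: "w \<in> W" using Wne by blast
  have "orbit r w = orbit ?p w"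
    using w permutes_in_image[OF rp(1)] by (intro orbit_cong0) (auto simp: join_perm_def)
  then have orb: "orbit ?p w = W" using orbit_cyclic_eq3[OF rp(2) w] by simp
  have restr: "perm_restrict ?p (S - W) = q"
    using permutes_not_in[OF q] by (auto simp: perm_restrict_def join_perm_def)
  have edges: "perm_edges ?p W = c" using rp(3) perm_edges_cong[of W ?p r] by (simp add: join_perm_def)
  have wS: "w \<in> S" using w WS by blast
  show "cycles4k_of ?p S = insert c (cycles4k_of q (S - W))"
    using cycles4k_of_remove_orbit[OF pS fin wS] W4 unfolding orb restr edges by simp
  show "c \<notin> cycles4k_of q (S - W)"
    using perm_edges_orbit_notin_cycles4k_of_remove[OF pS fin wS] unfolding orb restr edges .
qed

lemma cycle_cover_eq_join_perm:
  assumes p: "p \<in> cycle_covers E S" and fin: "finite S" and c: "c \<in> cycles4k_of p S"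
  defines "W \<equiv> \<Union>c"
  shows "perm_restrict p W \<in> orientations W c"
    and "perm_restrict p (S - W) \<in> cycle_covers E (S - W)"
    and "p = join_perm W (perm_restrict p W) (perm_restrict p (S - W))"
proof -
  have pS: "p permutes S" by (rule cycle_covers_permutes[OF p])
  obtain s where s: "s \<in> S" and c_eq: "c = perm_edges p (orbit p s)"
    using c unfolding cycles4k_of_def by blast
  have W: "W = orbit p s" unfolding W_def c_eq by (rule Union_perm_edges_orbit)
  have "perm_restrict p W = cycle_of_list (support p s)"
  proof
    fix x show "perm_restrict p W x = cycle_of_list (support p s) x"
      using cycle_restrict[OF permutes_imp_permutation[OF fin pS], of x s]
        id_outside_supp[of x "support p s"] set_support_eq_orbit[OF pS fin, of s] W
      by (cases "x \<in> W") (simp_all add: perm_restrict_def)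
  qed
  then have "perm_restrict p W permutes W"
    using cycle_permutes[of "support p s"] set_support_eq_orbit[OF pS fin, of s] W by simp
  moreover have "cyclic_on (perm_restrict p W) W"
    unfolding cyclic_on_perm_restrict W by (rule cyclic_on_orbit[OF pS fin])
  moreover have "perm_edges (perm_restrict p W) W = c"
    using perm_edges_cong[of W "perm_restrict p W" p] c_eq W by (simp add: perm_restrict_def)
  ultimately show "perm_restrict p W \<in> orientations W c" unfolding orientations_def by simp
  show "perm_restrict p (S - W) \<in> cycle_covers E (S - W)"
    unfolding W by (rule cycle_cover_perm_restrict[OF p fin])
  have "W \<subseteq> S" unfolding W by (rule permutes_orbit_subset[OF pS s])
  then show "p = join_perm W (perm_restrict p W) (perm_restrict p (S - W))"
    using permutes_not_in[OF pS] by (auto simp: join_perm_def perm_restrict_def)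
qed

lemma inj_on_join_perm: "inj_on (\<lambda>(r, q). join_perm W r q) ({r. r permutes W} \<times> {q. q permutes S - W})"
proof (rule inj_onI, clarify)
  fix r q r' q'
  assume "r permutes W" "q permutes S - W" "r' permutes W" "q' permutes S - W"
    and "join_perm W r q = join_perm W r' q'"
  then show "r = r' \<and> q = q'" using join_perm_inj[of r W r' q S q'] by blast
qed

lemma bij_betw_join_perm:
  assumes sym: "\<forall>u v. E u v \<longrightarrow> E v u" and fin: "finite S"
    and c: "cycle4k_in S E c" and cA: "c \<notin> A"
  defines "W \<equiv> \<Union>c"
  shows "bij_betw (\<lambda>(r, q). join_perm W r q)
           (orientations W c \<times> {q \<in> cycle_covers E (S - W). A \<subseteq> cycles4k_of q (S - W)})
           {p \<in> cycle_covers E S. insert c A \<subseteq> cycles4k_of p S}"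
proof (rule bij_betw_imageI)
  obtain l where l: "cycle_in S E l c" using c unfolding cycle4k_in_def by blast
  have WS: "W \<subseteq> S" and W4: "4 dvd card W" and Wne: "W \<noteq> {}"
    using cycle4k_inD[OF c] unfolding W_def by simp_all
  have join: "join_perm W r q \<in> cycle_covers E S"
    "cycles4k_of (join_perm W r q) S = insert c (cycles4k_of q (S - W))"
    if r: "r \<in> orientations W c" and q: "q \<in> cycle_covers E (S - W)" for r q
  proof -
    have "\<forall>x\<in>W. E x (r x)" using orientations_edge[OF sym l, of r] r unfolding W_def by simp
    then show "join_perm W r q \<in> cycle_covers E S" by (rule join_perm_cycle_cover[OF r q WS])
    show "cycles4k_of (join_perm W r q) S = insert c (cycles4k_of q (S - W))"
      by (rule cycles4k_of_join_perm(1)[OF r cycle_covers_permutes[OF q] WS fin W4 Wne])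
  qed
  have "orientations W c \<times> {q \<in> cycle_covers E (S - W). A \<subseteq> cycles4k_of q (S - W)} \<subseteq>
      {r. r permutes W} \<times> {q. q permutes S - W}"
    unfolding orientations_def using cycle_covers_permutes by blast
  then show "inj_on (\<lambda>(r, q). join_perm W r q)
      (orientations W c \<times> {q \<in> cycle_covers E (S - W). A \<subseteq> cycles4k_of q (S - W)})"
    by (rule inj_on_subset[OF inj_on_join_perm])
  show "(\<lambda>(r, q). join_perm W r q) `
      (orientations W c \<times> {q \<in> cycle_covers E (S - W). A \<subseteq> cycles4k_of q (S - W)}) =
      {p \<in> cycle_covers E S. insert c A \<subseteq> cycles4k_of p S}"
  proof (intro equalityI subsetI)
    fix p assume "p \<in> (\<lambda>(r, q). join_perm W r q) `
        (orientations W c \<times> {q \<in> cycle_covers E (S - W). A \<subseteq> cycles4k_of q (S - W)})"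
    then obtain r q where "r \<in> orientations W c" "q \<in> cycle_covers E (S - W)"
      "A \<subseteq> cycles4k_of q (S - W)" "p = join_perm W r q" by (auto simp: image_iff)
    then show "p \<in> {p \<in> cycle_covers E S. insert c A \<subseteq> cycles4k_of p S}" using join by auto
  next
    fix p assume "p \<in> {p \<in> cycle_covers E S. insert c A \<subseteq> cycles4k_of p S}"
    then have p: "p \<in> cycle_covers E S" and cp: "c \<in> cycles4k_of p S"
      and Ap: "A \<subseteq> cycles4k_of p S" by auto
    note split = cycle_cover_eq_join_perm[OF p fin cp, folded W_def]
    have "A \<subseteq> cycles4k_of (perm_restrict p (S - W)) (S - W)"
      using Ap cA join[OF split(1,2)] split(3) by auto
    then show "p \<in> (\<lambda>(r, q). join_perm W r q) `
        (orientations W c \<times> {q \<in> cycle_covers E (S - W). A \<subseteq> cycles4k_of q (S - W)})"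
      using split by (intro rev_image_eqI[of "(perm_restrict p W, perm_restrict p (S - W))"]) auto
  qed
qed

lemma sum_cycle_covers_through_cycle4k:
  assumes sym: "\<forall>u v. E u v \<longrightarrow> E v u" and fin: "finite S"
    and c: "cycle4k_in S E c" and A: "\<forall>a\<in>A. \<Union>a \<inter> \<Union>c = {}"
  shows "(\<Sum>p | p \<in> cycle_covers E S \<and> insert c A \<subseteq> cycles4k_of p S. (-1::real) ^ card (cycles4k_of p S)) =
    - 2 * (\<Sum>q | q \<in> cycle_covers E (S - \<Union>c) \<and> A \<subseteq> cycles4k_of q (S - \<Union>c).
              (-1) ^ card (cycles4k_of q (S - \<Union>c)))"
proof -
  define W where "W = \<Union>c"
  define Q where "Q = {q \<in> cycle_covers E (S - W). A \<subseteq> cycles4k_of q (S - W)}"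
  obtain l where l: "cycle_in S E l c" using c unfolding cycle4k_in_def by blast
  have WS: "W \<subseteq> S" and W4: "4 dvd card W" and Wne: "W \<noteq> {}"
    using cycle4k_inD[OF c] unfolding W_def by simp_all
  have cA: "c \<notin> A" using A Wne unfolding W_def by blast
  have card_join: "card (cycles4k_of (join_perm W r q) S) = Suc (card (cycles4k_of q (S - W)))"
    if "r \<in> orientations W c" "q \<in> Q" for r q
  proof -
    have "q permutes S - W" using that(2) cycle_covers_permutes unfolding Q_def by blast
    then show ?thesis
      using cycles4k_of_join_perm[OF that(1) _ WS fin W4 Wne] finite_cycles4k_of[of "S - W" q] fin
      by simp
  qed
  have "(\<Sum>p | p \<in> cycle_covers E S \<and> insert c A \<subseteq> cycles4k_of p S. (-1::real) ^ card (cycles4k_of p S)) =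
      (\<Sum>(r, q)\<in>orientations W c \<times> Q. (-1) ^ card (cycles4k_of (join_perm W r q) S))"
    unfolding Q_def W_def
    using sum.reindex_bij_betw[OF bij_betw_join_perm[OF sym fin c cA],
        of "\<lambda>p. (-1::real) ^ card (cycles4k_of p S)"]
    by (simp add: case_prod_unfold)
  also have "\<dots> = (\<Sum>(r, q)\<in>orientations W c \<times> Q. - ((-1) ^ card (cycles4k_of q (S - W))))"
    using card_join by (intro sum.cong) auto
  also have "\<dots> = real (card (orientations W c)) * (\<Sum>q\<in>Q. - ((-1) ^ card (cycles4k_of q (S - W))))"
    by (simp add: sum.cartesian_product[symmetric])
  also have "\<dots> = - 2 * (\<Sum>q\<in>Q. (-1) ^ card (cycles4k_of q (S - W)))"
    using card_orientations[OF l] unfolding W_def by (simp add: sum_negf)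
  finally show ?thesis unfolding Q_def W_def by simp
qed

lemma tuple_vertices_Cons: "tuple_vertices (c # Ts) = \<Union>c \<union> tuple_vertices Ts"
  unfolding tuple_vertices_def cycle_vertices_def by auto

lemma disjoint_4k_tuples_ConsD:
  assumes "c # Ts \<in> disjoint_4k_tuples S E n"
  shows "cycle4k_in S E c" and "\<forall>a\<in>set Ts. \<Union>a \<inter> \<Union>c = {}"
    and "Ts \<in> disjoint_4k_tuples (S - \<Union>c) E (length Ts)"
proof -
  have len: "length (c # Ts) = n" and cyc: "\<forall>C\<in>set (c # Ts). cycle4k_in S E C"
    and disj: "\<And>a b. a < n \<Longrightarrow> b < n \<Longrightarrow> a \<noteq> b \<Longrightarrow> \<Union>((c # Ts) ! a) \<inter> \<Union>((c # Ts) ! b) = {}"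
    using assms unfolding disjoint_4k_tuples_def cycle_vertices_def by auto
  show "cycle4k_in S E c" using cyc by simp
  show dis: "\<forall>a\<in>set Ts. \<Union>a \<inter> \<Union>c = {}"
  proof
    fix a assume "a \<in> set Ts"
    then obtain i where i: "i < length Ts" "a = Ts ! i" by (auto simp: set_conv_nth)
    have "\<Union>((c # Ts) ! Suc i) \<inter> \<Union>((c # Ts) ! 0) = {}"
      by (rule disj) (use len i in auto)
    then show "\<Union>a \<inter> \<Union>c = {}" unfolding i(2) by (simp only: nth_Cons_Suc nth_Cons_0)
  qed
  have "cycle4k_in (S - \<Union>c) E a" if "a \<in> set Ts" for a
  proof -
    have a: "cycle4k_in S E a" using cyc that by simp
    moreover have "\<Union>a \<subseteq> S - \<Union>c" using cycle4k_inD(1)[OF a] dis that by blast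
    ultimately show ?thesis by (rule cycle4k_in_mono)
  qed
  moreover have "\<Union>(Ts ! a) \<inter> \<Union>(Ts ! b) = {}" if "a < length Ts" "b < length Ts" "a \<noteq> b" for a b
    using disj[of "Suc a" "Suc b"] len that by (simp only: nth_Cons_Suc) simp
  ultimately show "Ts \<in> disjoint_4k_tuples (S - \<Union>c) E (length Ts)"
    unfolding disjoint_4k_tuples_def cycle_vertices_def by auto
qed

lemma disjoint_4k_tuplesD_vertices:
  "Ts \<in> disjoint_4k_tuples S E n \<Longrightarrow>
    tuple_vertices Ts \<subseteq> S \<and> finite (tuple_vertices Ts) \<and> 4 dvd card (tuple_vertices Ts)"
proof (induction Ts arbitrary: S n)
  case Nil then show ?case by (simp add: tuple_vertices_def)
next
  case (Cons c Ts)
  note D = disjoint_4k_tuples_ConsD[OF Cons.prems]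
  have IH: "tuple_vertices Ts \<subseteq> S - \<Union>c" "finite (tuple_vertices Ts)" "4 dvd card (tuple_vertices Ts)"
    using Cons.IH[OF D(3)] by auto
  note F = cycle4k_inD[OF D(1)]
  have "card (tuple_vertices (c # Ts)) = card (\<Union>c) + card (tuple_vertices Ts)"
    unfolding tuple_vertices_Cons using IH F by (intro card_Un_disjoint) auto
  then show ?case unfolding tuple_vertices_Cons using IH F by auto
qed

lemma disjoint_4k_tuples_mono:
  assumes Ts: "Ts \<in> disjoint_4k_tuples S E z" and sub: "tuple_vertices Ts \<subseteq> T"
  shows "Ts \<in> disjoint_4k_tuples T E z"
proof -
  have "cycle4k_in T E C" if "C \<in> set Ts" for C
    using Ts that sub cycle4k_in_mono[of S E C T]
    unfolding disjoint_4k_tuples_def tuple_vertices_def cycle_vertices_def by auto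
  then show ?thesis using Ts unfolding disjoint_4k_tuples_def by auto
qed

lemma take_in_disjoint_4k_tuples:
  "Ts \<in> disjoint_4k_tuples S E z \<Longrightarrow> k \<le> z \<Longrightarrow> take k Ts \<in> disjoint_4k_tuples S E k"
  unfolding disjoint_4k_tuples_def by (auto dest: in_set_takeD)

lemma disjoint_4k_tuples_nth_disjoint_take:
  assumes Ts: "Ts \<in> disjoint_4k_tuples S E z" and k: "k < z"
  shows "\<Union>(Ts ! k) \<inter> tuple_vertices (take k Ts) = {}"
proof -
  have disj: "\<Union>(Ts ! k) \<inter> \<Union>(Ts ! i) = {}" if "i < k" for i
    using Ts k that unfolding disjoint_4k_tuples_def cycle_vertices_def by auto
  have "\<exists>i < k. C = Ts ! i" if "C \<in> set (take k Ts)" for C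
    using that by (auto simp: set_conv_nth)
  then have "\<Union>(Ts ! k) \<inter> \<Union>C = {}" if "C \<in> set (take k Ts)" for C
    using that disj by blast
  then show ?thesis unfolding tuple_vertices_def cycle_vertices_def by blast
qed

lemma finite_disjoint_4k_tuples:
  assumes fin: "finite S" shows "finite (disjoint_4k_tuples S E z)"
proof (rule finite_subset)
  show "disjoint_4k_tuples S E z \<subseteq> {Ts. set Ts \<subseteq> Pow (Pow S) \<and> length Ts = z}"
    unfolding disjoint_4k_tuples_def using cycle4k_inD(1) by fastforce
  show "finite {Ts. set Ts \<subseteq> Pow (Pow S) \<and> length Ts = z}"
    by (rule finite_lists_length_eq) (simp add: fin)
qed

lemma disjoint_4k_tuples_in_cycle_cover:
  assumes p: "p \<in> cycle_covers E S" and fin: "finite S"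
  shows "{Ts \<in> disjoint_4k_tuples S E z. set Ts \<subseteq> cycles4k_of p S} =
    {Ts. length Ts = z \<and> distinct Ts \<and> set Ts \<subseteq> cycles4k_of p S}"
proof (intro set_eqI iffI)
  fix Ts assume Ts: "Ts \<in> {Ts \<in> disjoint_4k_tuples S E z. set Ts \<subseteq> cycles4k_of p S}"
  have len: "length Ts = z" and cyc: "\<forall>C\<in>set Ts. cycle4k_in S E C"
    and disj: "\<And>i j. i < z \<Longrightarrow> j < z \<Longrightarrow> i \<noteq> j \<Longrightarrow> \<Union>(Ts ! i) \<inter> \<Union>(Ts ! j) = {}"
    using Ts unfolding disjoint_4k_tuples_def cycle_vertices_def by auto
  have "Ts ! i \<noteq> Ts ! j" if "i < z" "j < z" "i \<noteq> j" for i j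
  proof
    assume "Ts ! i = Ts ! j"
    then have "\<Union>(Ts ! i) = {}" using disj[OF that] by simp
    moreover have "cycle4k_in S E (Ts ! i)" using cyc len that(1) by simp
    ultimately show False using cycle4k_inD(4) by blast
  qed
  then show "Ts \<in> {Ts. length Ts = z \<and> distinct Ts \<and> set Ts \<subseteq> cycles4k_of p S}"
    using Ts len unfolding distinct_conv_nth by auto
next
  fix Ts assume Ts: "Ts \<in> {Ts. length Ts = z \<and> distinct Ts \<and> set Ts \<subseteq> cycles4k_of p S}"
  have "cycle_vertices (Ts ! a) \<inter> cycle_vertices (Ts ! b) = {}" if "a < z" "b < z" "a \<noteq> b" for a b
  proof -
    have "Ts ! a \<noteq> Ts ! b" using Ts that nth_eq_iff_index_eq[of Ts a b] by auto
    moreover have "Ts ! a \<in> cycles4k_of p S" "Ts ! b \<in> cycles4k_of p S" using Ts that by auto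
    ultimately show ?thesis
      unfolding cycle_vertices_def by (rule cycles4k_of_disjoint[OF cycle_covers_permutes[OF p] fin, rotated 2])
  qed
  then show "Ts \<in> {Ts \<in> disjoint_4k_tuples S E z. set Ts \<subseteq> cycles4k_of p S}"
    using Ts cycle4k_in_cycles4k_of[OF p fin] unfolding disjoint_4k_tuples_def by auto
qed

lemma sum_cycle_covers_through_tuple:
  assumes sym: "\<forall>u v. E u v \<longrightarrow> E v u"
  shows "finite S \<Longrightarrow> Ts \<in> disjoint_4k_tuples S E n \<Longrightarrow>
    (\<Sum>p | p \<in> cycle_covers E S \<and> set Ts \<subseteq> cycles4k_of p S. (-1::real) ^ card (cycles4k_of p S)) =
    (-2) ^ length Ts * (\<Sum>q\<in>cycle_covers E (S - tuple_vertices Ts).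
                          (-1) ^ card (cycles4k_of q (S - tuple_vertices Ts)))"
proof (induction Ts arbitrary: S n)
  case Nil then show ?case by (simp add: tuple_vertices_def)
next
  case (Cons c Ts)
  note D = disjoint_4k_tuples_ConsD[OF Cons.prems(2)]
  have "S - \<Union>c - tuple_vertices Ts = S - tuple_vertices (c # Ts)"
    unfolding tuple_vertices_Cons by blast
  then show ?case
    using sum_cycle_covers_through_cycle4k[OF sym Cons.prems(1) D(1,2)] Cons.IH[OF _ D(3)] Cons.prems(1)
    by simp
qed

section \<open>The expansion of the permanent\<close>

lemma card_distinct_lists_subset:
  assumes fin: "finite A"
  shows "real (card {Ts. length Ts = z \<and> distinct Ts \<and> set Ts \<subseteq> A}) =
         (if z \<le> card A then fact (card A) / fact (card A - z) else 0)"
proof (cases "z \<le> card A")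
  case True
  have "card {Ts. length Ts = z \<and> distinct Ts \<and> set Ts \<subseteq> A} = fact (card A) div fact (card A - z)"
    using card_lists_distinct_length_eq[OF fin True] fact_div_fact[of "card A - z" "card A"] True by simp
  then show ?thesis using True by (simp add: real_of_nat_div fact_dvd)
next
  case False
  have "z \<le> card A" if "length Ts = z" "distinct Ts" "set Ts \<subseteq> A" for Ts
    using that card_mono[OF fin] distinct_card by metis
  then have empty: "{Ts. length Ts = z \<and> distinct Ts \<and> set Ts \<subseteq> A} = {}" using False by auto
  show ?thesis by (simp only: empty if_not_P[OF False] card.empty of_nat_0)
qed

text \<open>This is \<open>(1 - 2) ^ card A\<close>, expanded binomially with \<open>z! * (card A choose z)\<close> counting the
  lists of \<open>z\<close> distinct elements of \<open>A\<close>.\<close>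
lemma sum_distinct_lists_minus_two:
  assumes fin: "finite A" and N: "card A \<le> N"
  shows "(\<Sum>z=0..N. (-2) ^ z / fact z * real (card {Ts. length Ts = z \<and> distinct Ts \<and> set Ts \<subseteq> A}))
     = (-1::real) ^ card A"
proof -
  let ?n = "card A"
  have "(-2) ^ z / fact z * real (card {Ts. length Ts = z \<and> distinct Ts \<and> set Ts \<subseteq> A})
      = of_nat (?n choose z) * (-2::real) ^ z" for z
    by (cases "z \<le> ?n") (simp_all add: card_distinct_lists_subset[OF fin] binomial_fact)
  then have "(\<Sum>z=0..N. (-2) ^ z / fact z * real (card {Ts. length Ts = z \<and> distinct Ts \<and> set Ts \<subseteq> A}))
      = (\<Sum>z=0..N. of_nat (?n choose z) * (-2::real) ^ z)" by simp
  also have "\<dots> = (\<Sum>z=0..?n. of_nat (?n choose z) * (-2::real) ^ z)"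
    by (rule sum.mono_neutral_right) (use N in auto)
  also have "\<dots> = (-2 + 1) ^ ?n"
    using binomial_ring[of "-2::real" 1 ?n] by (simp add: atLeast0AtMost)
  finally show ?thesis by simp
qed

lemma sum_tuples_in_cycle_cover:
  assumes p: "p \<in> cycle_covers E S" and fin: "finite S" and N: "card S \<le> N"
  shows "(\<Sum>z=0..N. (-2) ^ z / fact z *
      (\<Sum>Ts\<in>disjoint_4k_tuples S E z. if set Ts \<subseteq> cycles4k_of p S then 1 else 0)) =
    (-1::real) ^ card (cycles4k_of p S)"
proof -
  have "(\<Sum>Ts\<in>disjoint_4k_tuples S E z. if set Ts \<subseteq> cycles4k_of p S then 1 else 0) =
      real (card {Ts. length Ts = z \<and> distinct Ts \<and> set Ts \<subseteq> cycles4k_of p S})" for z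
    using disjoint_4k_tuples_in_cycle_cover[OF p fin, of z]
    by (simp add: sum.If_cases finite_disjoint_4k_tuples[OF fin] Int_def)
  then show ?thesis
    using sum_distinct_lists_minus_two[OF finite_cycles4k_of[OF fin]] card_cycles4k_of_le[OF fin, of p] N
    by simp
qed

lemma minus_one_power_half_card_diff:
  assumes "4 dvd card T" "T \<subseteq> S" "finite S"
  shows "(-1::real) ^ (card (S - T) div 2) = (-1) ^ (card S div 2)"
proof -
  obtain j where j: "card T = 4 * j" using assms(1) by blast
  have "card T \<le> card S" using assms(2,3) by (rule card_mono[rotated])
  then have "card S div 2 = card (S - T) div 2 + 2 * j"
    using j card_Diff_subset[OF finite_subset[OF assms(2,3)] assms(2)] by linarith
  then show ?thesis by (simp add: power_add power_mult)
qed

lemma sum_cycle_covers_through_tuple_eq_det_on: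
  assumes sym: "\<forall>u v. E u v \<longrightarrow> E v u" and bip: "\<forall>u v. E u v \<longrightarrow> (u \<in> X \<longleftrightarrow> v \<notin> X)"
    and fin: "finite S" and Ts: "Ts \<in> disjoint_4k_tuples S E z"
  shows "(\<Sum>p | p \<in> cycle_covers E S \<and> set Ts \<subseteq> cycles4k_of p S. (-1::real) ^ card (cycles4k_of p S)) =
    (-2) ^ z * ((-1) ^ (card S div 2) * det_on E (S - tuple_vertices Ts))"
proof -
  have "length Ts = z" using Ts unfolding disjoint_4k_tuples_def by simp
  moreover have "(-1::real) ^ (card (S - tuple_vertices Ts) div 2) = (-1) ^ (card S div 2)"
    using disjoint_4k_tuplesD_vertices[OF Ts] fin by (intro minus_one_power_half_card_diff) auto
  ultimately show ?thesis
    using sum_cycle_covers_through_tuple[OF sym fin Ts]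
      sum_cycle_covers_minus_one_power_eq_det_on[OF bip, of "S - tuple_vertices Ts"] fin
    by simp
qed

definition det_expansion :: "('a \<Rightarrow> 'a \<Rightarrow> bool) \<Rightarrow> 'a set \<Rightarrow> nat \<Rightarrow> real" where
  "det_expansion E S m =
    (\<Sum>z=0..m. 4 ^ z / fact z * (\<Sum>Ts\<in>disjoint_4k_tuples S E z. det_on E (S - tuple_vertices Ts)))"

lemma per_on_eq_det_expansion:
  assumes sym: "\<forall>u v. E u v \<longrightarrow> E v u" and bip: "\<forall>u v. E u v \<longrightarrow> (u \<in> X \<longleftrightarrow> v \<notin> X)"
    and fin: "finite S" and N: "card S \<le> N"
  shows "per_on E S = (-1) ^ (card S div 2) * det_expansion E S N"
proof -
  let ?P = "cycle_covers E S" and ?D = "\<lambda>z. disjoint_4k_tuples S E z"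
  let ?c = "\<lambda>p. (-1::real) ^ card (cycles4k_of p S)"
  let ?ind = "\<lambda>Ts p. if set Ts \<subseteq> cycles4k_of p S then 1 else (0::real)"
  have "per_on E S = (\<Sum>p\<in>?P. ?c p * ?c p)"
    by (simp add: per_on_eq_card_cycle_covers[OF fin] flip: power_add)
  also have "\<dots> = (\<Sum>p\<in>?P. ?c p * (\<Sum>z=0..N. (-2) ^ z / fact z * (\<Sum>Ts\<in>?D z. ?ind Ts p)))"
    using sum_tuples_in_cycle_cover[OF _ fin N] by simp
  also have "\<dots> = (\<Sum>z=0..N. (-2) ^ z / fact z * (\<Sum>Ts\<in>?D z. \<Sum>p\<in>?P. ?c p * ?ind Ts p))"
    by (simp add: sum_distrib_left sum.swap[of _ ?P] mult_ac)
  also have "\<dots> = (\<Sum>z=0..N. (-2) ^ z / fact z *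
      (\<Sum>Ts\<in>?D z. (-2) ^ z * ((-1) ^ (card S div 2) * det_on E (S - tuple_vertices Ts))))"
    using sum_cycle_covers_through_tuple_eq_det_on[OF sym bip fin]
    by (simp add: sum.inter_filter[OF finite_cycle_covers[OF fin], symmetric] if_distrib
        cong: sum.cong if_cong)
  also have "\<dots> = (-1) ^ (card S div 2) * det_expansion E S N"
  proof -
    have "(-2) ^ z / fact z * ((-2) ^ z * x) = 4 ^ z / fact z * x" for z and x :: real
      by (simp flip: power_mult_distrib)
    then show ?thesis by (simp only: det_expansion_def sum_distrib_left) (simp add: mult_ac)
  qed
  finally show ?thesis .
qed

lemma det_expansion_truncate:
  assumes "m \<le> N" and "\<And>z. m < z \<Longrightarrow> z \<le> N \<Longrightarrow> disjoint_4k_tuples S E z = {}"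
  shows "det_expansion E S N = det_expansion E S m"
  unfolding det_expansion_def using assms by (intro sum.mono_neutral_right) auto

lemma disjoint_4k_tuples_empty_mono:
  assumes none: "disjoint_4k_tuples V E k = {}" and S: "S \<subseteq> V" and z: "k \<le> z"
  shows "disjoint_4k_tuples S E z = {}"
proof (rule ccontr)
  assume "disjoint_4k_tuples S E z \<noteq> {}"
  then obtain Ts where "Ts \<in> disjoint_4k_tuples S E z" by blast
  then have Tk: "take k Ts \<in> disjoint_4k_tuples S E k" using z by (rule take_in_disjoint_4k_tuples)
  then have "tuple_vertices (take k Ts) \<subseteq> V" using disjoint_4k_tuplesD_vertices[OF Tk] S by blast
  then have "take k Ts \<in> disjoint_4k_tuples V E k" by (rule disjoint_4k_tuples_mono[OF Tk])
  then show False using none by simp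
qed

lemma per_on_eq_det_expansion_if_no_disjoint_4k_tuples:
  assumes sym: "\<forall>u v. E u v \<longrightarrow> E v u" and bip: "\<forall>u v. E u v \<longrightarrow> (u \<in> X \<longleftrightarrow> v \<notin> X)"
    and fin: "finite V" and none: "disjoint_4k_tuples V E (m + 1) = {}" and S: "S \<subseteq> V"
  shows "per_on E S = (-1) ^ (card S div 2) * det_expansion E S m"
proof -
  have "per_on E S = (-1) ^ (card S div 2) * det_expansion E S (max m (card S))"
    using finite_subset[OF S fin] by (intro per_on_eq_det_expansion[OF sym bip]) auto
  also have "det_expansion E S (max m (card S)) = det_expansion E S m"
    using disjoint_4k_tuples_empty_mono[OF none S] by (intro det_expansion_truncate) auto
  finally show ?thesis .
qed

lemma disjoint_4k_tuples_on_minimal_tuple: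
  assumes T0: "T0 \<in> disjoint_4k_tuples V E (m + 1)"
    and min: "\<And>T. T \<in> disjoint_4k_tuples V E (m + 1) \<Longrightarrow> card (tuple_vertices T0) \<le> card (tuple_vertices T)"
    and Ts: "Ts \<in> disjoint_4k_tuples (tuple_vertices T0) E z" and z: "m + 1 \<le> z"
  shows "z = m + 1" and "tuple_vertices Ts = tuple_vertices T0"
proof -
  define S where "S = tuple_vertices T0"
  have S: "S \<subseteq> V" "finite S" using disjoint_4k_tuplesD_vertices[OF T0] unfolding S_def by auto
  define T where "T = take (m + 1) Ts"
  have T: "T \<in> disjoint_4k_tuples S E (m + 1)"
    unfolding T_def S_def by (rule take_in_disjoint_4k_tuples[OF Ts z])
  have TS: "tuple_vertices T \<subseteq> S" using disjoint_4k_tuplesD_vertices[OF T] by blast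
  then have "T \<in> disjoint_4k_tuples V E (m + 1)" using S(1) by (intro disjoint_4k_tuples_mono[OF T]) auto
  then have "card S \<le> card (tuple_vertices T)" using min unfolding S_def by blast
  then have T_cover: "tuple_vertices T = S" using card_seteq[OF S(2) TS] by blast
  have len: "length Ts = z" using Ts unfolding disjoint_4k_tuples_def by simp
  show "z = m + 1"
  proof (rule ccontr)
    assume "z \<noteq> m + 1"
    then have mz: "m + 1 < z" using z by simp
    have c: "cycle4k_in S E (Ts ! (m + 1))"
      using Ts len mz unfolding disjoint_4k_tuples_def S_def by auto
    have "\<Union>(Ts ! (m + 1)) \<inter> S = {}"
      unfolding T_cover[symmetric] T_def by (rule disjoint_4k_tuples_nth_disjoint_take[OF Ts mz])
    then show False using cycle4k_inD(1,4)[OF c] by blast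
  qed
  then show "tuple_vertices Ts = tuple_vertices T0"
    using T_cover len unfolding T_def S_def by simp
qed

lemma det_expansion_Suc_on_minimal_tuple:
  assumes T0: "T0 \<in> disjoint_4k_tuples V E (m + 1)"
    and min: "\<And>T. T \<in> disjoint_4k_tuples V E (m + 1) \<Longrightarrow> card (tuple_vertices T0) \<le> card (tuple_vertices T)"
    and N: "m + 1 \<le> N"
  defines "S \<equiv> tuple_vertices T0"
  shows "det_expansion E S N = det_expansion E S m +
    4 ^ (m + 1) / fact (m + 1) * real (card (disjoint_4k_tuples S E (m + 1)))"
proof -
  note minimal = disjoint_4k_tuples_on_minimal_tuple[OF T0 min, folded S_def]
  have "disjoint_4k_tuples S E z = {}" if "m + 1 < z" for z
    using minimal(1)[of _ z] that by fastforce
  then have "det_expansion E S N = det_expansion E S (m + 1)"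
    using N by (intro det_expansion_truncate) auto
  also have "(\<Sum>Ts\<in>disjoint_4k_tuples S E (m + 1). det_on E (S - tuple_vertices Ts)) =
      real (card (disjoint_4k_tuples S E (m + 1)))"
    using minimal(2) by (simp add: det_on_def)
  then have "det_expansion E S (m + 1) = det_expansion E S m +
      4 ^ (m + 1) / fact (m + 1) * real (card (disjoint_4k_tuples S E (m + 1)))"
    unfolding det_expansion_def by simp
  finally show ?thesis .
qed

lemma per_on_neq_det_expansion_if_disjoint_4k_tuples:
  assumes sym: "\<forall>u v. E u v \<longrightarrow> E v u" and bip: "\<forall>u v. E u v \<longrightarrow> (u \<in> X \<longleftrightarrow> v \<notin> X)"
    and some: "disjoint_4k_tuples V E (m + 1) \<noteq> {}"
  obtains S where "S \<subseteq> V" "even (card S)" "per_on E S \<noteq> (-1) ^ (card S div 2) * det_expansion E S m"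
proof -
  obtain T0 where T0: "T0 \<in> disjoint_4k_tuples V E (m + 1)"
    and min: "\<And>T. T \<in> disjoint_4k_tuples V E (m + 1) \<Longrightarrow> card (tuple_vertices T0) \<le> card (tuple_vertices T)"
    using some ex_has_least_nat[of "\<lambda>T. T \<in> disjoint_4k_tuples V E (m + 1)" _ "\<lambda>T. card (tuple_vertices T)"]
    by blast
  define S where "S = tuple_vertices T0"
  have S: "S \<subseteq> V" "finite S" "4 dvd card S"
    using disjoint_4k_tuplesD_vertices[OF T0] unfolding S_def by auto
  define N where "N = max (m + 1) (card S)"
  have "T0 \<in> disjoint_4k_tuples S E (m + 1)" by (rule disjoint_4k_tuples_mono[OF T0]) (simp add: S_def)
  then have "card (disjoint_4k_tuples S E (m + 1)) > 0"
    using finite_disjoint_4k_tuples[OF S(2)] card_gt_0_iff by blast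
  then have "det_expansion E S N \<noteq> det_expansion E S m"
    using det_expansion_Suc_on_minimal_tuple[OF T0 min, of N] unfolding S_def N_def by simp
  then have "per_on E S \<noteq> (-1) ^ (card S div 2) * det_expansion E S m"
    using per_on_eq_det_expansion[OF sym bip S(2), of N] unfolding N_def by simp
  moreover have "even (card S)" using S(3) by (metis dvd_trans even_numeral)
  ultimately show thesis using that S(1) by blast
qed

theorem theorem2:
  fixes V :: "'a set" and E :: "'a \<Rightarrow> 'a \<Rightarrow> bool" and m :: nat
  assumes "simple_graph V E" and "bipartite V E"
  shows "(disjoint_4k_tuples V E (m + 1) = {}) \<longleftrightarrow>
    (\<forall>S. S \<subseteq> V \<and> even (card S) \<longrightarrow>
       per_on E S = (-1) ^ (card S div 2) *
         (\<Sum>z=0..m. (4 ^ z / fact z) *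
            (\<Sum>Ts\<in>disjoint_4k_tuples S E z. det_on E (S - tuple_vertices Ts))))"
proof -
  have fin: "finite V" and sym: "\<forall>u v. E u v \<longrightarrow> E v u"
    using assms(1) unfolding simple_graph_def by auto
  obtain X where bip: "\<forall>u v. E u v \<longrightarrow> (u \<in> X \<longleftrightarrow> v \<notin> X)"
    using assms(2) unfolding bipartite_def by blast
  show ?thesis
    unfolding det_expansion_def[symmetric]
  proof
    assume "disjoint_4k_tuples V E (m + 1) = {}"
    then show "\<forall>S. S \<subseteq> V \<and> even (card S) \<longrightarrow> per_on E S = (-1) ^ (card S div 2) * det_expansion E S m"
      using per_on_eq_det_expansion_if_no_disjoint_4k_tuples[OF sym bip fin] by blast
  next
    assume "\<forall>S. S \<subseteq> V \<and> even (card S) \<longrightarrow> per_on E S = (-1) ^ (card S div 2) * det_expansion E S m"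
    then show "disjoint_4k_tuples V E (m + 1) = {}"
      using per_on_neq_det_expansion_if_disjoint_4k_tuples[OF sym bip, of V m] by blast
  qed
qed

end
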